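(* Let $\theta\in[0,1]$ and let $Y$ be a real random variable with Gaussian-mixture CDF $F_Y(x)=\sum_{l=1}^{N_l}a_l\Phi\big(\frac{x-\mu_l}{\sigma_l}\big)$, where $a_l\ge0$, $\sum_l a_l=1$, $\sigma_l>0$, and let $\mu=\sum_l a_l\mu_l$ and $\sigma^2$ be the mean and variance of $Y$. Let $X\sim\mathrm{Bernoulli}(\theta)$ be independent of $Y$, set $\varepsilon=XY$ and $\sigma_\varepsilon^2=\theta\sigma^2+(1-\theta)\theta\mu^2$, and for an integer $M\ge1$ let $\bar\varepsilon\sim\mathcal N(\theta\mu,\sigma_\varepsilon^2/M)$. Then $$R(\varepsilon,\bar\varepsilon)\le(1-\theta)\mathbb E[|Y|]+\sum_{l=1}^{N_l}a_l\Big(|\theta\mu-\mu_l|+\Big|\frac{\sigma_\varepsilon}{\sqrt M}-\sigma_l\Big|\Big),$$ where $\mathbb E[|Y|]\le\sum_{l=1}^{N_l}\Big\{\sqrt{\tfrac{2}{\pi}}\,\sigma_l\exp\big(\tfrac{-\mu_l^2}{2\sigma_l^2}\big)+\mu_l\big[1-2\Phi\big(\tfrac{-\mu_l}{\sigma_l}\big)\big]\Big\}$.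
   Context: $\Phi$ is the CDF of the standard normal distribution and $\mathcal N(m,s^2)$ the normal distribution with mean $m$ and variance $s^2$. For real random variables $\xi,\eta$ with CDFs $F,G$, $R(\xi,\eta)=\int_{-\infty}^{\infty}|F(x)-G(x)|\,dx$ is the (1-)Wasserstein distance between their distributions. (In the paper, $\varepsilon$ models a misbehaving node's error and $\bar\varepsilon$ the central-limit Gaussian model of the average of $M$ detected errors used for compensation.) *)

theory Defs
  imports "HOL-Probability.Probability"
begin

definition Phi :: "real \<Rightarrow> real" where
  "Phi x = cdf (density lborel std_normal_density) x"

definition normal_cdf :: "real \<Rightarrow> real \<Rightarrow> real \<Rightarrow> real" where
  "normal_cdf m s x = (if s = 0 then (if m \<le> x then 1 else 0) else Phi ((x - m) / s))"

text \<open>1-Wasserstein distance between distributions given by CDFs F and G: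
  integral of |F - G| over the real line (possibly infinite).\<close>
definition wass1 :: "(real \<Rightarrow> real) \<Rightarrow> (real \<Rightarrow> real) \<Rightarrow> ennreal" where
  "wass1 F G = (\<integral>\<^sup>+ x. ennreal \<bar>F x - G x\<bar> \<partial>lborel)"

end

theory Submission
  imports Defs "HOL-Real_Asymp.Real_Asymp"
begin

(* The CDF of XY is (1 - theta) 1[0,inf) + theta F_Y, whose distance to F_Y is (1 - theta) R(0, Y);
   so the triangle inequality through Y gives R(XY, ebar) <= (1 - theta) R(0, Y) + R(Y, ebar).
   Comparing with a point mass is exact, R(0, Y) = E|Y|. R is convex in mixture weights, and the
   coupling m + s Z of normals gives R(N(mu_l, sig_l^2), N(m, s^2)) <= |mu_l - m| + |sig_l - s| E|Z|.
   For E|Y| itself, at every x all component CDFs lie on the same side of the unit step, so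
   E|Y| = R(0, Y) is exactly the mixture of the folded normal means E|mu_l + sig_l Z|. *)

section \<open>Wasserstein distance between CDFs\<close>

lemma sum_ennreal_mult:
  assumes "\<And>i. i \<in> A \<Longrightarrow> 0 \<le> a i" and "\<And>i. i \<in> A \<Longrightarrow> 0 \<le> b i"
  shows "(\<Sum>i\<in>A. ennreal (a i) * ennreal (b i)) = ennreal (\<Sum>i\<in>A. a i * b i)"
proof -
  have "(\<Sum>i\<in>A. ennreal (a i) * ennreal (b i)) = (\<Sum>i\<in>A. ennreal (a i * b i))"
    using assms by (intro sum.cong) (simp_all add: ennreal_mult)
  then show ?thesis using assms by simp
qed

lemma wass1_commute: "wass1 F G = wass1 G F"
  unfolding wass1_def by (simp add: abs_minus_commute)

lemma wass1_triangle:
  assumes [measurable]: "F \<in> borel_measurable borel" "G \<in> borel_measurable borel" "H \<in> borel_measurable borel"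
  shows "wass1 F H \<le> wass1 F G + wass1 G H"
proof -
  have "wass1 F H \<le> (\<integral>\<^sup>+x. ennreal \<bar>F x - G x\<bar> + ennreal \<bar>G x - H x\<bar> \<partial>lborel)"
    unfolding wass1_def
    by (intro nn_integral_mono) (simp add: ennreal_plus[symmetric] ennreal_leI del: ennreal_plus)
  also have "\<dots> = wass1 F G + wass1 G H"
    unfolding wass1_def by (simp add: nn_integral_add)
  finally show ?thesis .
qed

lemma wass1_mix_left:
  assumes [measurable]: "S \<in> borel_measurable borel" "F \<in> borel_measurable borel" and "t \<le> 1"
  shows "wass1 (\<lambda>x. (1 - t) * S x + t * F x) F = ennreal (1 - t) * wass1 S F"
proof -
  have "\<bar>(1 - t) * S x + t * F x - F x\<bar> = (1 - t) * \<bar>S x - F x\<bar>" for x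
  proof -
    have "(1 - t) * S x + t * F x - F x = (1 - t) * (S x - F x)" by algebra
    then show ?thesis using \<open>t \<le> 1\<close> by (simp add: abs_mult)
  qed
  then show ?thesis
    unfolding wass1_def using \<open>t \<le> 1\<close> by (simp add: ennreal_mult nn_integral_cmult)
qed

lemma wass1_convex_comb_le:
  assumes a_nonneg: "\<And>l. l \<in> A \<Longrightarrow> 0 \<le> a l" and a_sum: "sum a A = 1"
    and [measurable]: "\<And>l. l \<in> A \<Longrightarrow> F l \<in> borel_measurable borel" "G \<in> borel_measurable borel"
  shows "wass1 (\<lambda>x. \<Sum>l\<in>A. a l * F l x) G \<le> (\<Sum>l\<in>A. ennreal (a l) * wass1 (F l) G)"
proof -
  have "ennreal \<bar>(\<Sum>l\<in>A. a l * F l x) - G x\<bar> \<le> (\<Sum>l\<in>A. ennreal (a l) * ennreal \<bar>F l x - G x\<bar>)" for x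
  proof -
    have "(\<Sum>l\<in>A. a l * F l x) - G x = (\<Sum>l\<in>A. a l * (F l x - G x))"
      using a_sum by (simp add: right_diff_distrib sum_subtractf flip: sum_distrib_right)
    then have "\<bar>(\<Sum>l\<in>A. a l * F l x) - G x\<bar> \<le> (\<Sum>l\<in>A. a l * \<bar>F l x - G x\<bar>)"
      using sum_abs[of "\<lambda>l. a l * (F l x - G x)" A] a_nonneg by (simp add: abs_mult)
    then show ?thesis
      using a_nonneg by (simp add: sum_ennreal_mult ennreal_leI)
  qed
  then have "wass1 (\<lambda>x. \<Sum>l\<in>A. a l * F l x) G \<le> (\<integral>\<^sup>+x. (\<Sum>l\<in>A. ennreal (a l) * ennreal \<bar>F l x - G x\<bar>) \<partial>lborel)"
    unfolding wass1_def by (rule nn_integral_mono)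
  also have "\<dots> = (\<Sum>l\<in>A. ennreal (a l) * wass1 (F l) G)"
    unfolding wass1_def by (simp add: nn_integral_sum nn_integral_cmult)
  finally show ?thesis .
qed

lemma abs_sum_mult_same_sign:
  fixes a f :: "'a \<Rightarrow> real"
  assumes "\<And>l. l \<in> A \<Longrightarrow> 0 \<le> a l" and "(\<forall>l\<in>A. 0 \<le> f l) \<or> (\<forall>l\<in>A. f l \<le> 0)"
  shows "\<bar>\<Sum>l\<in>A. a l * f l\<bar> = (\<Sum>l\<in>A. a l * \<bar>f l\<bar>)"
  using assms(2)
proof
  assume "\<forall>l\<in>A. 0 \<le> f l"
  then show ?thesis using assms(1) by (simp add: sum_nonneg)
next
  assume nonpos: "\<forall>l\<in>A. f l \<le> 0"
  then have "(\<Sum>l\<in>A. a l * f l) \<le> 0" using assms(1) by (simp add: sum_nonpos mult_nonneg_nonpos)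
  then show ?thesis using nonpos by (simp add: sum_negf[symmetric])
qed

lemma wass1_convex_comb_step:
  assumes a_nonneg: "\<And>l. l \<in> A \<Longrightarrow> 0 \<le> a l" and a_sum: "sum a A = 1"
    and F_range: "\<And>l x. l \<in> A \<Longrightarrow> F l x \<in> {0..1}"
    and [measurable]: "\<And>l. l \<in> A \<Longrightarrow> F l \<in> borel_measurable borel"
  shows "wass1 (\<lambda>x. \<Sum>l\<in>A. a l * F l x) (indicator {c..}) = (\<Sum>l\<in>A. ennreal (a l) * wass1 (F l) (indicator {c..}))"
proof -
  have "ennreal \<bar>(\<Sum>l\<in>A. a l * F l x) - indicator {c..} x\<bar>
      = (\<Sum>l\<in>A. ennreal (a l) * ennreal \<bar>F l x - indicator {c..} x\<bar>)" for x
  proof -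
    have "(\<Sum>l\<in>A. a l * F l x) - indicator {c..} x = (\<Sum>l\<in>A. a l * (F l x - indicator {c..} x))"
      using a_sum by (simp add: right_diff_distrib sum_subtractf flip: sum_distrib_right)
    moreover have "(\<forall>l\<in>A. 0 \<le> F l x - indicator {c..} x) \<or> (\<forall>l\<in>A. F l x - indicator {c..} x \<le> 0)"
      using F_range by (cases "c \<le> x") auto
    ultimately show ?thesis
      using a_nonneg by (simp add: abs_sum_mult_same_sign sum_ennreal_mult)
  qed
  then show ?thesis
    unfolding wass1_def by (simp add: nn_integral_sum nn_integral_cmult)
qed

section \<open>Coupling bounds\<close>

lemma cdf_distr_eq_prob:
  assumes "prob_space P" and "U \<in> borel_measurable P"
  shows "cdf (distr P borel U) x = measure P {\<omega>\<in>space P. U \<omega> \<le> x}"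
proof -
  have "cdf (distr P borel U) x = measure P (U -` {..x} \<inter> space P)"
    unfolding cdf_def2 using assms by (subst measure_distr) auto
  also have "U -` {..x} \<inter> space P = {\<omega>\<in>space P. U \<omega> \<le> x}" by auto
  finally show ?thesis .
qed

lemma borel_measurable_cdf: "real_distribution M \<Longrightarrow> cdf M \<in> borel_measurable borel"
  by (intro borel_measurable_mono monoI
      finite_borel_measure.cdf_nondecreasing[OF real_distribution.finite_borel_measure_M])

lemma borel_measurable_cdf_distr:
  "prob_space P \<Longrightarrow> U \<in> borel_measurable P \<Longrightarrow> cdf (distr P borel U) \<in> borel_measurable borel"
  by (simp add: borel_measurable_cdf prob_space.real_distribution_distr)

lemma nn_integral_abs_diff_layer_cake:
  assumes "sigma_finite_measure P"
    and [measurable]: "U \<in> borel_measurable P" "V \<in> borel_measurable P"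
  shows "(\<integral>\<^sup>+x. emeasure P {\<omega>\<in>space P. U \<omega> \<le> x \<and> x < V \<omega>}
              + emeasure P {\<omega>\<in>space P. V \<omega> \<le> x \<and> x < U \<omega>} \<partial>lborel)
     = (\<integral>\<^sup>+\<omega>. ennreal \<bar>U \<omega> - V \<omega>\<bar> \<partial>P)"
proof -
  interpret pair_sigma_finite lborel P
    using assms(1) by (simp add: pair_sigma_finite_def lborel.sigma_finite_measure_axioms)
  let ?between = "\<lambda>\<omega> x. indicator {U \<omega>..<V \<omega>} x + indicator {V \<omega>..<U \<omega>} x :: ennreal"
  have [measurable]: "(\<lambda>(x, \<omega>). ?between \<omega> x) \<in> borel_measurable (lborel \<Otimes>\<^sub>M P)"
    unfolding indicator_def atLeastLessThan_iff by measurable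
  have "emeasure P {\<omega>\<in>space P. U \<omega> \<le> x \<and> x < V \<omega>} + emeasure P {\<omega>\<in>space P. V \<omega> \<le> x \<and> x < U \<omega>}
      = (\<integral>\<^sup>+\<omega>. ?between \<omega> x \<partial>P)" for x
  proof -
    have "(\<integral>\<^sup>+\<omega>. ?between \<omega> x \<partial>P)
        = (\<integral>\<^sup>+\<omega>. indicator {\<omega>\<in>space P. U \<omega> \<le> x \<and> x < V \<omega>} \<omega>
              + indicator {\<omega>\<in>space P. V \<omega> \<le> x \<and> x < U \<omega>} \<omega> \<partial>P)"
      by (intro nn_integral_cong) (auto split: split_indicator)
    then show ?thesis by (simp add: nn_integral_add)
  qed
  then have "(\<integral>\<^sup>+x. emeasure P {\<omega>\<in>space P. U \<omega> \<le> x \<and> x < V \<omega>}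
              + emeasure P {\<omega>\<in>space P. V \<omega> \<le> x \<and> x < U \<omega>} \<partial>lborel)
      = (\<integral>\<^sup>+x. \<integral>\<^sup>+\<omega>. ?between \<omega> x \<partial>P \<partial>lborel)"
    by simp
  also have "\<dots> = (\<integral>\<^sup>+\<omega>. \<integral>\<^sup>+x. ?between \<omega> x \<partial>lborel \<partial>P)"
    by (rule Fubini'[symmetric]) measurable
  also have "\<dots> = (\<integral>\<^sup>+\<omega>. ennreal \<bar>U \<omega> - V \<omega>\<bar> \<partial>P)"
    by (intro nn_integral_cong) (auto simp: nn_integral_add ennreal_neg abs_real_def)
  finally show ?thesis .
qed

lemma wass1_cdf_distr_le:
  assumes P: "prob_space P" and [measurable]: "U \<in> borel_measurable P" "V \<in> borel_measurable P"
  shows "wass1 (cdf (distr P borel U)) (cdf (distr P borel V)) \<le> (\<integral>\<^sup>+\<omega>. ennreal \<bar>U \<omega> - V \<omega>\<bar> \<partial>P)"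
proof -
  interpret prob_space P by fact
  have "ennreal \<bar>cdf (distr P borel U) x - cdf (distr P borel V) x\<bar>
      \<le> emeasure P {\<omega>\<in>space P. U \<omega> \<le> x \<and> x < V \<omega>} + emeasure P {\<omega>\<in>space P. V \<omega> \<le> x \<and> x < U \<omega>}"
    for x
  proof -
    define A where "A = {\<omega>\<in>space P. U \<omega> \<le> x}"
    define B where "B = {\<omega>\<in>space P. V \<omega> \<le> x}"
    have [measurable]: "A \<in> sets P" "B \<in> sets P" unfolding A_def B_def by measurable
    have "prob (A - B) = prob A - prob (A \<inter> B)" "prob (B - A) = prob B - prob (A \<inter> B)"
      by (simp_all add: finite_measure_Diff' Int_commute)
    then have "\<bar>prob A - prob B\<bar> \<le> prob (A - B) + prob (B - A)"
      using measure_nonneg[of P "A - B"] measure_nonneg[of P "B - A"] unfolding abs_le_iff by linarith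
    moreover have "A - B = {\<omega>\<in>space P. U \<omega> \<le> x \<and> x < V \<omega>}" "B - A = {\<omega>\<in>space P. V \<omega> \<le> x \<and> x < U \<omega>}"
      unfolding A_def B_def by auto
    ultimately show ?thesis
      using cdf_distr_eq_prob[OF P, of U x] cdf_distr_eq_prob[OF P, of V x]
      by (simp add: A_def B_def emeasure_eq_measure ennreal_plus[symmetric] ennreal_leI del: ennreal_plus)
  qed
  then have "wass1 (cdf (distr P borel U)) (cdf (distr P borel V))
      \<le> (\<integral>\<^sup>+x. emeasure P {\<omega>\<in>space P. U \<omega> \<le> x \<and> x < V \<omega>}
              + emeasure P {\<omega>\<in>space P. V \<omega> \<le> x \<and> x < U \<omega>} \<partial>lborel)"
    unfolding wass1_def by (rule nn_integral_mono)
  also have "\<dots> = (\<integral>\<^sup>+\<omega>. ennreal \<bar>U \<omega> - V \<omega>\<bar> \<partial>P)"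
    by (rule nn_integral_abs_diff_layer_cake) (simp_all add: sigma_finite_measure_axioms)
  finally show ?thesis .
qed

lemma wass1_cdf_distr_const:
  assumes P: "prob_space P" and [measurable]: "U \<in> borel_measurable P"
  shows "wass1 (cdf (distr P borel U)) (indicator {c..}) = (\<integral>\<^sup>+\<omega>. ennreal \<bar>U \<omega> - c\<bar> \<partial>P)"
proof -
  interpret prob_space P by fact
  have "ennreal \<bar>cdf (distr P borel U) x - indicator {c..} x\<bar>
      = emeasure P {\<omega>\<in>space P. U \<omega> \<le> x \<and> x < c} + emeasure P {\<omega>\<in>space P. c \<le> x \<and> x < U \<omega>}"
    for x
  proof (cases "c \<le> x")
    case True
    then have "{\<omega>\<in>space P. c \<le> x \<and> x < U \<omega>} = space P - {\<omega>\<in>space P. U \<omega> \<le> x}" by auto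
    then show ?thesis
      using True cdf_distr_eq_prob[OF P, of U x] by (simp add: emeasure_eq_measure prob_compl)
  next
    case False
    then show ?thesis
      using cdf_distr_eq_prob[OF P, of U x] by (simp add: emeasure_eq_measure)
  qed
  then have "wass1 (cdf (distr P borel U)) (indicator {c..})
      = (\<integral>\<^sup>+x. emeasure P {\<omega>\<in>space P. U \<omega> \<le> x \<and> x < c}
              + emeasure P {\<omega>\<in>space P. c \<le> x \<and> x < U \<omega>} \<partial>lborel)"
    unfolding wass1_def by simp
  also have "\<dots> = (\<integral>\<^sup>+\<omega>. ennreal \<bar>U \<omega> - c\<bar> \<partial>P)"
    by (rule nn_integral_abs_diff_layer_cake) (simp_all add: sigma_finite_measure_axioms)
  finally show ?thesis .
qed

section \<open>The standard normal distribution\<close>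

lemma prob_space_std_normal_distribution: "prob_space std_normal_distribution"
  by (rule prob_space_normal_density) simp

lemma Phi_eq_cdf: "Phi = cdf std_normal_distribution"
  by (simp add: Phi_def fun_eq_iff)

lemma borel_measurable_Phi [measurable]: "Phi \<in> borel_measurable borel"
  unfolding Phi_eq_cdf by (rule borel_measurable_cdf[OF real_dist_normal_dist])

lemma Phi_nonneg: "0 \<le> Phi x"
  unfolding Phi_eq_cdf
  by (rule finite_borel_measure.cdf_nonneg[OF real_distribution.finite_borel_measure_M[OF real_dist_normal_dist]])

lemma Phi_le_1: "Phi x \<le> 1"
  unfolding Phi_eq_cdf by (rule real_distribution.cdf_bounded_prob[OF real_dist_normal_dist])

lemma borel_measurable_normal_cdf [measurable]: "normal_cdf m s \<in> borel_measurable borel"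
  unfolding normal_cdf_def[abs_def] by measurable

lemma normal_cdf_range: "normal_cdf m s x \<in> {0..1}"
  by (simp add: normal_cdf_def Phi_nonneg Phi_le_1)

lemma cdf_distr_std_normal_affine:
  assumes "0 \<le> s"
  shows "cdf (distr std_normal_distribution borel (\<lambda>z. m + s * z)) = normal_cdf m s"
proof
  fix x
  have "cdf (distr std_normal_distribution borel (\<lambda>z. m + s * z)) x
      = measure std_normal_distribution {z. m + s * z \<le> x}"
    using cdf_distr_eq_prob[OF prob_space_std_normal_distribution] by simp
  also have "\<dots> = normal_cdf m s x"
  proof (cases "s = 0")
    case True
    then show ?thesis
      using prob_space.prob_space[OF prob_space_std_normal_distribution] by (simp add: normal_cdf_def)
  next
    case False
    then have "{z. m + s * z \<le> x} = {..(x - m) / s}"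
      using assms by (auto simp: field_simps)
    then show ?thesis
      using False by (simp add: normal_cdf_def Phi_def cdf_def2)
  qed
  finally show "cdf (distr std_normal_distribution borel (\<lambda>z. m + s * z)) x = normal_cdf m s x" .
qed

lemma DERIV_neg_std_normal_density:
  "DERIV (\<lambda>z. - std_normal_density z) x :> x * std_normal_density x"
  unfolding std_normal_density_def by (auto intro!: derivative_eq_intros simp: field_simps)

lemma std_normal_density_tendsto_0: "(std_normal_density \<longlongrightarrow> 0) at_top"
  unfolding std_normal_density_def[abs_def] by real_asymp

lemma std_normal_first_moment_atLeast:
  assumes "0 \<le> d"
  shows "has_bochner_integral lborel (\<lambda>z. indicator {d..} z * (z * std_normal_density z)) (std_normal_density d)"
proof (rule has_bochner_integral_nn_integral)
  have "(\<integral>\<^sup>+z. ennreal (indicator {d..} z * (z * std_normal_density z)) \<partial>lborel)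
      = (\<integral>\<^sup>+z. ennreal (z * std_normal_density z) * indicator {d..} z \<partial>lborel)"
    by (intro nn_integral_cong) (auto split: split_indicator)
  also have "\<dots> = ennreal (0 - (- std_normal_density d))"
    using assms DERIV_neg_std_normal_density tendsto_minus[OF std_normal_density_tendsto_0]
    by (intro nn_integral_FTC_atLeast) auto
  finally show "(\<integral>\<^sup>+z. ennreal (indicator {d..} z * (z * std_normal_density z)) \<partial>lborel)
      = ennreal (std_normal_density d)"
    by simp
qed (use assms in \<open>auto split: split_indicator\<close>)

lemma std_normal_first_moment_greaterThan:
  "has_bochner_integral lborel (\<lambda>z. indicator {c<..} z * (z * std_normal_density z)) (std_normal_density c)"
proof -
  \<comment> \<open>The improper FTC needs a nonnegative integrand, which it has beyond \<open>\<bar>c\<bar>\<close>.\<close>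
  define d where "d = \<bar>c\<bar>"
  have "c \<le> d" "0 \<le> d" "std_normal_density d = std_normal_density c"
    unfolding d_def std_normal_density_def by auto
  have "has_bochner_integral lborel (\<lambda>z. z * std_normal_density z * indicator {c..d} z)
      (- std_normal_density d - - std_normal_density c)"
    using \<open>c \<le> d\<close> DERIV_neg_std_normal_density
    by (intro has_bochner_integral_FTC_Icc_real) (auto simp: std_normal_density_def intro!: continuous_intros)
  from has_bochner_integral_add[OF this std_normal_first_moment_atLeast[OF \<open>0 \<le> d\<close>]]
  have "has_bochner_integral lborel
      (\<lambda>z. z * std_normal_density z * indicator {c..d} z + indicator {d..} z * (z * std_normal_density z))
      (std_normal_density c)"
    using \<open>std_normal_density d = std_normal_density c\<close> by simp
  moreover have "AE z in lborel. indicator {c<..} z * (z * std_normal_density z)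
      = z * std_normal_density z * indicator {c..d} z + indicator {d..} z * (z * std_normal_density z)"
    using AE_lborel_singleton[of c] AE_lborel_singleton[of d]
    by eventually_elim (use \<open>c \<le> d\<close> in \<open>auto split: split_indicator\<close>)
  ultimately show ?thesis
    by (subst has_bochner_integral_cong_AE) auto
qed

lemma std_normal_first_moment_atMost:
  "has_bochner_integral lborel (\<lambda>z. indicator {..c} z * (z * std_normal_density z)) (- std_normal_density c)"
proof -
  have "has_bochner_integral lborel
      (\<lambda>z. std_normal_density z * z ^ (2 * 0 + 1) - indicator {c<..} z * (z * std_normal_density z))
      (0 - std_normal_density c)"
    by (rule has_bochner_integral_diff[OF std_normal_moment_odd std_normal_first_moment_greaterThan])
  moreover have "(\<lambda>z. std_normal_density z * z ^ (2 * 0 + 1) - indicator {c<..} z * (z * std_normal_density z))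
      = (\<lambda>z. indicator {..c} z * (z * std_normal_density z))"
    by (auto simp: fun_eq_iff split: split_indicator)
  ultimately show ?thesis by simp
qed

lemma std_normal_mass_atMost:
  "has_bochner_integral lborel (\<lambda>z. indicator {..c} z * std_normal_density z) (Phi c)"
proof -
  have "integrable lborel (\<lambda>z. indicator {..c} z * std_normal_density z)"
    using integrable_mult_indicator[OF _ integrable_std_normal_moment[of 0]] by simp
  moreover have "Phi c = (\<integral>z. indicator {..c} z * std_normal_density z \<partial>lborel)"
  proof -
    have "Phi c = enn2real (\<integral>\<^sup>+z. ennreal (std_normal_density z) * indicator {..c} z \<partial>lborel)"
      unfolding Phi_def cdf_def2 measure_def by (subst emeasure_density) auto
    also have "\<dots> = (\<integral>z. indicator {..c} z * std_normal_density z \<partial>lborel)"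
      by (rule enn2real_nn_integral_eq_integral) (auto split: split_indicator)
    finally show ?thesis .
  qed
  ultimately show ?thesis
    by (simp add: has_bochner_integral_integrable)
qed

definition folded_normal_mean :: "real \<Rightarrow> real \<Rightarrow> real" where
  "folded_normal_mean m s = sqrt (2 / pi) * s * exp (- m\<^sup>2 / (2 * s\<^sup>2)) + m * (1 - 2 * Phi (- m / s))"

lemma folded_normal_mean_eq:
  assumes "0 < s"
  shows "folded_normal_mean m s = m * (1 - 2 * Phi (- m / s)) + 2 * s * std_normal_density (- m / s)"
proof -
  have "2 / sqrt (2 * pi) = sqrt (2 / pi)"
    by (simp add: real_sqrt_divide real_sqrt_mult field_simps)
  moreover have "- (- m / s)\<^sup>2 / 2 = - m\<^sup>2 / (2 * s\<^sup>2)"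
    using assms by (simp add: field_simps power2_eq_square)
  moreover have "2 * std_normal_density (- m / s) = 2 / sqrt (2 * pi) * exp (- (- m / s)\<^sup>2 / 2)"
    by (simp add: std_normal_density_def)
  ultimately have "2 * std_normal_density (- m / s) = sqrt (2 / pi) * exp (- m\<^sup>2 / (2 * s\<^sup>2))"
    by (simp only:)
  then show ?thesis
    unfolding folded_normal_mean_def by (simp add: algebra_simps)
qed

lemma std_normal_abs_affine_moment:
  assumes "0 < s"
  shows "has_bochner_integral lborel (\<lambda>z. std_normal_density z * \<bar>m + s * z\<bar>) (folded_normal_mean m s)"
proof -
  define c where "c = - m / s"
  have sign: "z \<le> c \<longleftrightarrow> m + s * z \<le> 0" for z
    unfolding c_def using assms by (simp add: field_simps) linarith
  have unit_mass: "has_bochner_integral lborel (\<lambda>z. std_normal_density z * z ^ (2 * 0)) 1"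
    using std_normal_moment_even[of 0] by simp
  have integrand: "(\<lambda>z. std_normal_density z * \<bar>m + s * z\<bar>)
      = (\<lambda>z. m * (std_normal_density z * z ^ (2 * 0)) + s * (std_normal_density z * z ^ (2 * 0 + 1))
           - (2 * m * (indicator {..c} z * std_normal_density z)
              + 2 * s * (indicator {..c} z * (z * std_normal_density z))))" (is "?f = ?g")
  proof
    fix z
    show "?f z = ?g z"
      using sign[of z] by (cases "z \<le> c") (simp_all add: abs_of_nonpos abs_of_pos algebra_simps)
  qed
  have "has_bochner_integral lborel ?f (m * 1 + s * 0 - (2 * m * Phi c + 2 * s * - std_normal_density c))"
    unfolding integrand
    by (intro has_bochner_integral_diff has_bochner_integral_add has_bochner_integral_mult_right
        unit_mass std_normal_moment_odd std_normal_mass_atMost std_normal_first_moment_atMost)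
  then show ?thesis
    unfolding folded_normal_mean_eq[OF assms] c_def by (simp add: algebra_simps)
qed

lemma folded_normal_mean_nonneg: "0 < s \<Longrightarrow> 0 \<le> folded_normal_mean m s"
  using has_bochner_integral_integral_eq[OF std_normal_abs_affine_moment]
    integral_nonneg_AE[of "\<lambda>z. std_normal_density z * \<bar>m + s * z\<bar>" lborel]
  by fastforce

lemma nn_integral_std_normal_abs_affine:
  assumes "0 < s"
  shows "(\<integral>\<^sup>+z. ennreal \<bar>m + s * z\<bar> \<partial>std_normal_distribution) = ennreal (folded_normal_mean m s)"
proof -
  note moment = std_normal_abs_affine_moment[OF assms, of m]
  have "(\<integral>\<^sup>+z. ennreal \<bar>m + s * z\<bar> \<partial>std_normal_distribution)
      = (\<integral>\<^sup>+z. ennreal (std_normal_density z * \<bar>m + s * z\<bar>) \<partial>lborel)"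
    by (subst nn_integral_density) (simp_all add: ennreal_mult)
  also have "\<dots> = ennreal (folded_normal_mean m s)"
    using nn_integral_eq_integral[OF integrable.intros[OF moment]]
      has_bochner_integral_integral_eq[OF moment] by simp
  finally show ?thesis .
qed

lemma wass1_normal_cdf_step:
  assumes "0 < s"
  shows "wass1 (normal_cdf m s) (indicator {0..}) = ennreal (folded_normal_mean m s)"
proof -
  have "wass1 (normal_cdf m s) (indicator {0..})
      = wass1 (cdf (distr std_normal_distribution borel (\<lambda>z. m + s * z))) (indicator {0..})"
    using assms by (simp add: cdf_distr_std_normal_affine)
  also have "\<dots> = (\<integral>\<^sup>+z. ennreal \<bar>m + s * z - 0\<bar> \<partial>std_normal_distribution)"
    by (rule wass1_cdf_distr_const[OF prob_space_std_normal_distribution]) measurable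
  also have "\<dots> = ennreal (folded_normal_mean m s)"
    using nn_integral_std_normal_abs_affine[OF assms] by simp
  finally show ?thesis .
qed

lemma wass1_normal_cdf_le:
  assumes "0 \<le> \<sigma>" and "0 \<le> s"
  shows "wass1 (normal_cdf \<mu> \<sigma>) (normal_cdf m s) \<le> ennreal (\<bar>m - \<mu>\<bar> + \<bar>s - \<sigma>\<bar>)"
proof -
  interpret N: prob_space std_normal_distribution by (rule prob_space_std_normal_distribution)
  have abs_moment: "(\<integral>\<^sup>+z. ennreal \<bar>z\<bar> \<partial>std_normal_distribution) = ennreal (sqrt (2 / pi))"
    using nn_integral_std_normal_abs_affine[of 1 0, OF zero_less_one] by (simp add: folded_normal_mean_def)
  have "wass1 (normal_cdf \<mu> \<sigma>) (normal_cdf m s)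
      = wass1 (cdf (distr std_normal_distribution borel (\<lambda>z. \<mu> + \<sigma> * z)))
              (cdf (distr std_normal_distribution borel (\<lambda>z. m + s * z)))"
    using assms by (simp add: cdf_distr_std_normal_affine)
  also have "\<dots> \<le> (\<integral>\<^sup>+z. ennreal \<bar>(\<mu> + \<sigma> * z) - (m + s * z)\<bar> \<partial>std_normal_distribution)"
    by (rule wass1_cdf_distr_le[OF prob_space_std_normal_distribution]) simp_all
  also have "\<dots> \<le> (\<integral>\<^sup>+z. ennreal \<bar>m - \<mu>\<bar> + ennreal \<bar>s - \<sigma>\<bar> * ennreal \<bar>z\<bar> \<partial>std_normal_distribution)"
  proof (rule nn_integral_mono)
    fix z
    have "\<bar>(\<mu> + \<sigma> * z) - (m + s * z)\<bar> = \<bar>(m - \<mu>) + (s - \<sigma>) * z\<bar>"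
      by (simp add: algebra_simps abs_minus_commute)
    also have "\<dots> \<le> \<bar>m - \<mu>\<bar> + \<bar>s - \<sigma>\<bar> * \<bar>z\<bar>"
      by (metis abs_mult abs_triangle_ineq)
    finally show "ennreal \<bar>(\<mu> + \<sigma> * z) - (m + s * z)\<bar> \<le> ennreal \<bar>m - \<mu>\<bar> + ennreal \<bar>s - \<sigma>\<bar> * ennreal \<bar>z\<bar>"
      by (simp add: ennreal_mult[symmetric] ennreal_plus[symmetric] ennreal_leI del: ennreal_plus)
  qed
  also have "\<dots> = ennreal \<bar>m - \<mu>\<bar> + ennreal \<bar>s - \<sigma>\<bar> * ennreal (sqrt (2 / pi))"
    using N.emeasure_space_1 by (simp add: nn_integral_add nn_integral_cmult abs_moment)
  also have "\<dots> \<le> ennreal \<bar>m - \<mu>\<bar> + ennreal \<bar>s - \<sigma>\<bar> * 1"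
    using pi_gt3 by (intro add_left_mono mult_left_mono) (simp_all add: real_sqrt_le_1_iff)
  also have "\<dots> = ennreal (\<bar>m - \<mu>\<bar> + \<bar>s - \<sigma>\<bar>)"
    by (simp add: ennreal_plus)
  finally show ?thesis .
qed

section \<open>Bernoulli-masked Gaussian mixtures\<close>

lemma cdf_distr_bernoulli_mult:
  assumes "prob_space M"
    and [measurable]: "X \<in> borel_measurable M" "Y \<in> borel_measurable M"
    and X1: "prob_space.prob M {\<omega> \<in> space M. X \<omega> = 1} = \<theta>"
    and X0: "prob_space.prob M {\<omega> \<in> space M. X \<omega> = 0} = 1 - \<theta>"
    and indep: "prob_space.indep_var M borel X borel Y"
  shows "cdf (distr M borel (\<lambda>\<omega>. X \<omega> * Y \<omega>)) x
    = (1 - \<theta>) * indicator {0..} x + \<theta> * cdf (distr M borel Y) x"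
proof -
  interpret prob_space M by fact
  have "prob ({\<omega> \<in> space M. X \<omega> = 1} \<union> {\<omega> \<in> space M. X \<omega> = 0}) = 1"
    using X1 X0 by (subst finite_measure_Union) auto
  then have "AE \<omega> in M. X \<omega> = 1 \<or> X \<omega> = 0"
    by (subst (asm) prob_eq_1) (auto elim!: AE_mp)
  then have "prob {\<omega>\<in>space M. X \<omega> * Y \<omega> \<le> x}
      = prob ({\<omega>\<in>space M. X \<omega> = 1 \<and> Y \<omega> \<le> x} \<union> {\<omega>\<in>space M. X \<omega> = 0 \<and> 0 \<le> x})"
    by (intro measure_eq_AE) auto
  then have "cdf (distr M borel (\<lambda>\<omega>. X \<omega> * Y \<omega>)) x
      = prob ({\<omega>\<in>space M. X \<omega> = 1 \<and> Y \<omega> \<le> x} \<union> {\<omega>\<in>space M. X \<omega> = 0 \<and> 0 \<le> x})"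
    by (simp add: cdf_distr_eq_prob[OF prob_space_axioms])
  also have "\<dots> = prob {\<omega>\<in>space M. X \<omega> = 1 \<and> Y \<omega> \<le> x} + prob {\<omega>\<in>space M. X \<omega> = 0 \<and> 0 \<le> x}"
    by (rule finite_measure_Union) auto
  also have "prob {\<omega>\<in>space M. X \<omega> = 1 \<and> Y \<omega> \<le> x} = \<theta> * cdf (distr M borel Y) x"
  proof -
    have "prob ((\<lambda>\<omega>. (X \<omega>, Y \<omega>)) -` ({1} \<times> {..x}) \<inter> space M)
        = prob (X -` {1} \<inter> space M) * prob (Y -` {..x} \<inter> space M)"
      by (rule indep_varD[OF indep]) auto
    moreover have "(\<lambda>\<omega>. (X \<omega>, Y \<omega>)) -` ({1} \<times> {..x}) \<inter> space M = {\<omega>\<in>space M. X \<omega> = 1 \<and> Y \<omega> \<le> x}"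
      "X -` {1} \<inter> space M = {\<omega> \<in> space M. X \<omega> = 1}" "Y -` {..x} \<inter> space M = {\<omega>\<in>space M. Y \<omega> \<le> x}"
      by auto
    ultimately show ?thesis
      using X1 cdf_distr_eq_prob[OF prob_space_axioms, of Y x] by simp
  qed
  also have "prob {\<omega>\<in>space M. X \<omega> = 0 \<and> 0 \<le> x} = (1 - \<theta>) * indicator {0..} x"
    using X0 by (cases "0 \<le> x") auto
  finally show ?thesis by simp
qed

lemma nn_integral_abs_gaussian_mixture:
  assumes "prob_space M" and "Y \<in> borel_measurable M"
    and a_nonneg: "\<And>l. l \<in> A \<Longrightarrow> 0 \<le> a l" and a_sum: "sum a A = 1"
    and sig_pos: "\<And>l. l \<in> A \<Longrightarrow> 0 < sig l"
    and cdf_Y: "cdf (distr M borel Y) = (\<lambda>x. \<Sum>l\<in>A. a l * normal_cdf (mu l) (sig l) x)"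
  shows "(\<integral>\<^sup>+\<omega>. ennreal \<bar>Y \<omega>\<bar> \<partial>M) = ennreal (\<Sum>l\<in>A. a l * folded_normal_mean (mu l) (sig l))"
proof -
  have "(\<integral>\<^sup>+\<omega>. ennreal \<bar>Y \<omega>\<bar> \<partial>M) = wass1 (cdf (distr M borel Y)) (indicator {0..})"
    using wass1_cdf_distr_const[OF assms(1,2), of 0] by simp
  also have "\<dots> = (\<Sum>l\<in>A. ennreal (a l) * wass1 (normal_cdf (mu l) (sig l)) (indicator {0..}))"
    unfolding cdf_Y using a_nonneg a_sum by (rule wass1_convex_comb_step) (simp_all add: normal_cdf_range del: atLeastAtMost_iff)
  also have "\<dots> = (\<Sum>l\<in>A. ennreal (a l) * ennreal (folded_normal_mean (mu l) (sig l)))"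
    by (intro sum.cong) (simp_all add: wass1_normal_cdf_step sig_pos)
  also have "\<dots> = ennreal (\<Sum>l\<in>A. a l * folded_normal_mean (mu l) (sig l))"
    by (rule sum_ennreal_mult) (simp_all add: a_nonneg folded_normal_mean_nonneg sig_pos)
  finally show ?thesis .
qed

lemma wass1_bernoulli_mult_le:
  assumes "prob_space M"
    and [measurable]: "X \<in> borel_measurable M" "Y \<in> borel_measurable M"
    and "prob_space.prob M {\<omega> \<in> space M. X \<omega> = 1} = \<theta>"
    and "prob_space.prob M {\<omega> \<in> space M. X \<omega> = 0} = 1 - \<theta>"
    and "prob_space.indep_var M borel X borel Y"
    and "\<theta> \<le> 1" and [measurable]: "G \<in> borel_measurable borel"
  shows "wass1 (cdf (distr M borel (\<lambda>\<omega>. X \<omega> * Y \<omega>))) G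
    \<le> ennreal (1 - \<theta>) * (\<integral>\<^sup>+\<omega>. ennreal \<bar>Y \<omega>\<bar> \<partial>M) + wass1 (cdf (distr M borel Y)) G"
proof -
  define F where "F = cdf (distr M borel Y)"
  have [measurable]: "F \<in> borel_measurable borel"
    unfolding F_def using assms(1) by (rule borel_measurable_cdf_distr) simp
  have "cdf (distr M borel (\<lambda>\<omega>. X \<omega> * Y \<omega>)) = (\<lambda>x. (1 - \<theta>) * indicator {0..} x + \<theta> * F x)"
    using cdf_distr_bernoulli_mult[OF assms(1-6)] by (simp add: F_def fun_eq_iff)
  moreover have "wass1 (\<lambda>x. (1 - \<theta>) * indicator {0..} x + \<theta> * F x) G
      \<le> wass1 (\<lambda>x. (1 - \<theta>) * indicator {0..} x + \<theta> * F x) F + wass1 F G"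
    by (rule wass1_triangle) measurable
  moreover have "wass1 (\<lambda>x. (1 - \<theta>) * indicator {0..} x + \<theta> * F x) F = ennreal (1 - \<theta>) * wass1 F (indicator {0..})"
    using \<open>\<theta> \<le> 1\<close> by (subst wass1_mix_left) (simp_all add: wass1_commute)
  moreover have "wass1 F (indicator {0..}) = (\<integral>\<^sup>+\<omega>. ennreal \<bar>Y \<omega>\<bar> \<partial>M)"
    unfolding F_def using wass1_cdf_distr_const[OF assms(1,3), of 0] by simp
  ultimately show ?thesis
    unfolding F_def by simp
qed

lemma wass1_gaussian_mixture_normal_le:
  assumes a_nonneg: "\<And>l. l \<in> A \<Longrightarrow> 0 \<le> a l" and a_sum: "sum a A = 1"
    and sig_nonneg: "\<And>l. l \<in> A \<Longrightarrow> 0 \<le> sig l" and "0 \<le> s"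
  shows "wass1 (\<lambda>x. \<Sum>l\<in>A. a l * normal_cdf (mu l) (sig l) x) (normal_cdf m s)
    \<le> ennreal (\<Sum>l\<in>A. a l * (\<bar>m - mu l\<bar> + \<bar>s - sig l\<bar>))"
proof -
  have "wass1 (\<lambda>x. \<Sum>l\<in>A. a l * normal_cdf (mu l) (sig l) x) (normal_cdf m s)
      \<le> (\<Sum>l\<in>A. ennreal (a l) * wass1 (normal_cdf (mu l) (sig l)) (normal_cdf m s))"
    using a_nonneg a_sum by (rule wass1_convex_comb_le) simp_all
  also have "\<dots> \<le> (\<Sum>l\<in>A. ennreal (a l) * ennreal (\<bar>m - mu l\<bar> + \<bar>s - sig l\<bar>))"
    using sig_nonneg \<open>0 \<le> s\<close> by (intro sum_mono mult_left_mono wass1_normal_cdf_le) simp_all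
  also have "\<dots> = ennreal (\<Sum>l\<in>A. a l * (\<bar>m - mu l\<bar> + \<bar>s - sig l\<bar>))"
    using a_nonneg by (intro sum_ennreal_mult) simp_all
  finally show ?thesis .
qed

lemma expectation_abs_gaussian_mixture:
  assumes "prob_space M" and "Y \<in> borel_measurable M"
    and "\<And>l. l \<in> A \<Longrightarrow> 0 \<le> a l" and "sum a A = 1" and "\<And>l. l \<in> A \<Longrightarrow> 0 < sig l"
    and "cdf (distr M borel Y) = (\<lambda>x. \<Sum>l\<in>A. a l * normal_cdf (mu l) (sig l) x)"
  shows "prob_space.expectation M (\<lambda>\<omega>. \<bar>Y \<omega>\<bar>) = (\<Sum>l\<in>A. a l * folded_normal_mean (mu l) (sig l))"
proof -
  note nn_eq = nn_integral_abs_gaussian_mixture[OF assms]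
  have "integrable M (\<lambda>\<omega>. \<bar>Y \<omega>\<bar>)"
    using assms(2) nn_eq by (intro integrableI_nn_integral_finite) auto
  then have "ennreal (prob_space.expectation M (\<lambda>\<omega>. \<bar>Y \<omega>\<bar>)) = ennreal (\<Sum>l\<in>A. a l * folded_normal_mean (mu l) (sig l))"
    using nn_eq by (subst nn_integral_eq_integral[symmetric]) auto
  moreover have "0 \<le> (\<Sum>l\<in>A. a l * folded_normal_mean (mu l) (sig l))"
    using assms(3,5) by (intro sum_nonneg mult_nonneg_nonneg folded_normal_mean_nonneg) auto
  ultimately show ?thesis
    by (simp add: integral_nonneg_AE)
qed

lemma wass1_bernoulli_mult_gaussian_mixture_le:
  assumes "prob_space M"
    and "X \<in> borel_measurable M" "Y \<in> borel_measurable M"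
    and "prob_space.prob M {\<omega> \<in> space M. X \<omega> = 1} = \<theta>"
    and "prob_space.prob M {\<omega> \<in> space M. X \<omega> = 0} = 1 - \<theta>"
    and "prob_space.indep_var M borel X borel Y" and "\<theta> \<in> {0..1}"
    and "\<And>l. l \<in> A \<Longrightarrow> 0 \<le> a l" and "sum a A = 1" and "\<And>l. l \<in> A \<Longrightarrow> 0 < sig l"
    and cdf_Y: "cdf (distr M borel Y) = (\<lambda>x. \<Sum>l\<in>A. a l * normal_cdf (mu l) (sig l) x)"
    and "0 \<le> s"
  shows "wass1 (cdf (distr M borel (\<lambda>\<omega>. X \<omega> * Y \<omega>))) (normal_cdf m s)
    \<le> ennreal ((1 - \<theta>) * prob_space.expectation M (\<lambda>\<omega>. \<bar>Y \<omega>\<bar>)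
        + (\<Sum>l\<in>A. a l * (\<bar>m - mu l\<bar> + \<bar>s - sig l\<bar>)))"
proof -
  interpret prob_space M by fact
  let ?E = "expectation (\<lambda>\<omega>. \<bar>Y \<omega>\<bar>)" and ?S = "\<Sum>l\<in>A. a l * (\<bar>m - mu l\<bar> + \<bar>s - sig l\<bar>)"
  have nn_E: "(\<integral>\<^sup>+\<omega>. ennreal \<bar>Y \<omega>\<bar> \<partial>M) = ennreal ?E"
    using nn_integral_abs_gaussian_mixture[OF assms(1,3,8-11)] expectation_abs_gaussian_mixture[OF assms(1,3,8-11)]
    by simp
  have "0 \<le> ?E" "0 \<le> ?S" "0 \<le> 1 - \<theta>"
    using assms(7,8) by (auto intro!: integral_nonneg_AE sum_nonneg)
  have "wass1 (cdf (distr M borel (\<lambda>\<omega>. X \<omega> * Y \<omega>))) (normal_cdf m s)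
      \<le> ennreal (1 - \<theta>) * (\<integral>\<^sup>+\<omega>. ennreal \<bar>Y \<omega>\<bar> \<partial>M) + wass1 (cdf (distr M borel Y)) (normal_cdf m s)"
    using assms(7) by (intro wass1_bernoulli_mult_le[OF assms(1-6)]) auto
  also have "\<dots> \<le> ennreal (1 - \<theta>) * ennreal ?E + ennreal ?S"
    unfolding nn_E cdf_Y using assms(8-10,12)
    by (intro add_left_mono wass1_gaussian_mixture_normal_le) (auto intro: less_imp_le)
  also have "\<dots> = ennreal ((1 - \<theta>) * ?E + ?S)"
    using \<open>0 \<le> ?E\<close> \<open>0 \<le> ?S\<close> \<open>0 \<le> 1 - \<theta>\<close> by (simp add: ennreal_mult ennreal_plus)
  finally show ?thesis .
qed

theorem theorem3:
  fixes M :: "'s measure"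
    and X Y ebar :: "'s \<Rightarrow> real"
    and \<theta> :: real and N :: nat and Mc :: nat
    and a mu sig :: "nat \<Rightarrow> real"
  assumes "prob_space M"
    and "\<theta> \<in> {0..1}"
    and "\<And>l. l \<in> {1..N} \<Longrightarrow> a l \<ge> 0"
    and "(\<Sum>l=1..N. a l) = 1"
    and "\<And>l. l \<in> {1..N} \<Longrightarrow> sig l > 0"
    and "Y \<in> borel_measurable M"
    and "\<And>x. cdf (distr M borel Y) x = (\<Sum>l=1..N. a l * Phi ((x - mu l) / sig l))"
    and "X \<in> borel_measurable M"
    and "prob_space.prob M {\<omega> \<in> space M. X \<omega> = 1} = \<theta>"
    and "prob_space.prob M {\<omega> \<in> space M. X \<omega> = 0} = 1 - \<theta>"
    and "prob_space.indep_var M borel X borel Y"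
    and "Mc \<ge> 1"
    and "ebar \<in> borel_measurable M"
  defines "\<mu> \<equiv> (\<Sum>l=1..N. a l * mu l)"
    and "\<sigma>\<epsilon> \<equiv> sqrt (\<theta> * prob_space.variance M Y + (1 - \<theta>) * \<theta> * (\<Sum>l=1..N. a l * mu l)\<^sup>2)"
  assumes "\<And>x. cdf (distr M borel ebar) x = normal_cdf (\<theta> * \<mu>) (\<sigma>\<epsilon> / sqrt (real Mc)) x"
  shows "wass1 (cdf (distr M borel (\<lambda>\<omega>. X \<omega> * Y \<omega>))) (cdf (distr M borel ebar))
           \<le> ennreal ((1 - \<theta>) * prob_space.expectation M (\<lambda>\<omega>. \<bar>Y \<omega>\<bar>)
               + (\<Sum>l=1..N. a l * (\<bar>\<theta> * \<mu> - mu l\<bar> + \<bar>\<sigma>\<epsilon> / sqrt (real Mc) - sig l\<bar>)))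
         \<and> prob_space.expectation M (\<lambda>\<omega>. \<bar>Y \<omega>\<bar>)
           \<le> (\<Sum>l=1..N. sqrt (2 / pi) * sig l * exp (- (mu l)\<^sup>2 / (2 * (sig l)\<^sup>2))
                        + mu l * (1 - 2 * Phi (- mu l / sig l)))"
proof -
  interpret prob_space M by fact
  define s where "s = \<sigma>\<epsilon> / sqrt (real Mc)"
  have "0 \<le> \<theta> * variance Y + (1 - \<theta>) * \<theta> * (\<Sum>l=1..N. a l * mu l)\<^sup>2"
    using assms(2) by (intro add_nonneg_nonneg mult_nonneg_nonneg integral_nonneg_AE) auto
  then have "0 \<le> s"
    unfolding s_def \<sigma>\<epsilon>_def by simp
  have "sig l \<noteq> 0" if "l \<in> {1..N}" for l
    using assms(5)[OF that] by simp
  then have cdf_Y: "cdf (distr M borel Y) = (\<lambda>x. \<Sum>l=1..N. a l * normal_cdf (mu l) (sig l) x)"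
    unfolding assms(7) by (intro ext sum.cong) (simp_all add: normal_cdf_def)
  have cdf_ebar: "cdf (distr M borel ebar) = normal_cdf (\<theta> * \<mu>) s"
    using assms(16) by (simp add: fun_eq_iff s_def)
  have E_abs: "expectation (\<lambda>\<omega>. \<bar>Y \<omega>\<bar>) = (\<Sum>l=1..N. a l * folded_normal_mean (mu l) (sig l))"
    using assms(1,6,3,4,5) cdf_Y by (rule expectation_abs_gaussian_mixture)
  have "wass1 (cdf (distr M borel (\<lambda>\<omega>. X \<omega> * Y \<omega>))) (cdf (distr M borel ebar))
      \<le> ennreal ((1 - \<theta>) * expectation (\<lambda>\<omega>. \<bar>Y \<omega>\<bar>)
          + (\<Sum>l=1..N. a l * (\<bar>\<theta> * \<mu> - mu l\<bar> + \<bar>s - sig l\<bar>)))"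
    unfolding cdf_ebar using assms(1,8,6,9,10,11,2,3,4,5) cdf_Y \<open>0 \<le> s\<close>
    by (rule wass1_bernoulli_mult_gaussian_mixture_le)
  moreover have "expectation (\<lambda>\<omega>. \<bar>Y \<omega>\<bar>) \<le> (\<Sum>l=1..N. folded_normal_mean (mu l) (sig l))"
    unfolding E_abs using assms(3,4,5) member_le_sum[of _ "{1..N}" a]
    by (intro sum_mono mult_left_le_one_le) (auto simp: folded_normal_mean_nonneg)
  ultimately show ?thesis
    unfolding s_def folded_normal_mean_def by simp
qed

end
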